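(* Let $n\ge1$ and let $\tau$ be real with $\tau<\frac{1}{n-1}$ (no upper restriction when $n=1$). Then every $\omega\in\Omega_n(\tau)$ is non-resonant, i.e. $\langle k,\omega\rangle\notin\mathbb{Z}$ for all $k\in\mathbb{Z}^n\setminus\{0\}$. Here $\Omega_n(\tau)$ is the set of $\omega\in\mathbb{R}^n$ for which there exists $C>0$ such that $\|T\omega\|_{\mathbb{Z}}\ge C\,T^{-(1+\tau)/n}$ for every integer $T\ge1$.
   Context: For $\omega\in\mathbb{R}^n$, $|\omega|=\max_i|\omega_i|$ and $\|\omega\|_{\mathbb{Z}}=\min_{k\in\mathbb{Z}^n}|\omega-k|$. *)

theory Defs
  imports "HOL-Analysis.Analysis"
begin

definition maxnorm :: "real^'n \<Rightarrow> real" where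
  "maxnorm w = Max (range (\<lambda>i. \<bar>w $ i\<bar>))"

definition int_vec :: "real^'n \<Rightarrow> bool" where
  "int_vec k \<longleftrightarrow> (\<forall>i. k $ i \<in> \<int>)"

text \<open>||w||_Z = min over integer vectors k of |w - k| (the minimum is attained; Inf).\<close>
definition znorm :: "real^'n \<Rightarrow> real" where
  "znorm w = Inf {maxnorm (w - k) | k. int_vec k}"

definition Omega :: "real \<Rightarrow> (real^'n) set" where
  "Omega \<tau> = {\<omega>. \<exists>C>0. \<forall>T::nat. T \<ge> 1 \<longrightarrow>
      znorm (real T *\<^sub>R \<omega>) \<ge> C * real T powr (-(1 + \<tau>) / real CARD('n))}"

definition non_resonant :: "real^'n \<Rightarrow> bool" where
  "non_resonant \<omega> \<longleftrightarrow> (\<forall>k. int_vec k \<and> k \<noteq> 0 \<longrightarrow> k \<bullet> \<omega> \<notin> \<int>)"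

end

theory Submission
  imports Defs
begin

text \<open>If \<open>k \<bullet> \<omega> = m\<close> with \<open>k\<close> a nonzero integer vector, \<open>k\<^sub>j \<noteq> 0\<close>, Dirichlet's theorem gives
  a common denominator \<open>q \<le> Q^(n-1)\<close> approximating the \<open>n - 1\<close> coordinates \<open>\<omega>\<^sub>i\<close>, \<open>i \<noteq> j\<close>,
  to within \<open>1/Q\<close>; the relation then makes \<open>|k\<^sub>j| q \<omega>\<^sub>j\<close> close to an integer as well. So
  \<open>T = |k\<^sub>j| q \<le> c Q^(n-1)\<close> has \<open>\<parallel>T \<omega>\<parallel>\<^sub>\<int> \<le> c/Q\<close>, where \<open>c = \<Sum>|k\<^sub>i|\<close>. Against the
  lower bound \<open>C T^(-e)\<close>, \<open>e = (1+\<tau>)/n\<close>, this keeps \<open>Q^(1-(n-1) max e 0)\<close> bounded for all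
  \<open>Q\<close>, which is impossible because \<open>\<tau> < 1/(n-1)\<close> means exactly \<open>(n-1) e < 1\<close>.\<close>

lemma maxnorm_le:
  fixes w :: "real^'n"
  assumes "\<And>i. \<bar>w $ i\<bar> \<le> b"
  shows "maxnorm w \<le> b"
  unfolding maxnorm_def using assms by (subst Max_le_iff) auto

lemma maxnorm_nonneg: "0 \<le> maxnorm (w::real^'n)"
  unfolding maxnorm_def by (rule order_trans[OF abs_ge_zero Max_ge]) auto

lemma znorm_le:
  fixes x v :: "real^'n"
  assumes "int_vec v"
  shows "znorm x \<le> maxnorm (x - v)"
  unfolding znorm_def
  by (rule cInf_lower) (use assms maxnorm_nonneg in \<open>auto intro!: bdd_belowI\<close>)

lemma Dirichlet_approx_simult_finite:
  fixes \<theta> :: "'a \<Rightarrow> real" and N :: nat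
  assumes "finite A" "N > 0"
  obtains q p where "0 < q" "q \<le> int (N ^ card A)"
    and "\<And>i. i \<in> A \<Longrightarrow> \<bar>of_int q * \<theta> i - of_int (p i)\<bar> < 1 / N"
proof -
  obtain h where h: "bij_betw h {0..<card A} A"
    using ex_bij_betw_nat_finite[OF assms(1)] by blast
  obtain q p where q: "0 < q" "q \<le> int (N ^ card A)"
    and approx: "\<And>l. l < card A \<Longrightarrow> \<bar>of_int q * \<theta> (h l) - of_int (p l)\<bar> < 1 / N"
    using Dirichlet_approx_simult[OF assms(2), where \<theta>="\<theta> \<circ> h" and n="card A"] by auto
  show thesis
  proof (rule that[OF q, of "p \<circ> inv_into {0..<card A} h"])
    fix i assume "i \<in> A"
    then have "i \<in> h ` {0..<card A}" using h by (simp add: bij_betw_def)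
    from inv_into_into[OF this] f_inv_into_f[OF this]
    show "\<bar>of_int q * \<theta> i - of_int ((p \<circ> inv_into {0..<card A} h) i)\<bar> < 1 / N"
      using approx[of "inv_into {0..<card A} h i"] by simp
  qed
qed

lemma inner_relation_coordinate_eq:
  fixes k \<omega> :: "real^'n" and P :: "'n \<Rightarrow> real"
  assumes "k \<bullet> \<omega> = m" "k $ j \<noteq> 0"
  shows "\<bar>k $ j\<bar> * q * \<omega> $ j - sgn (k $ j) * (q * m - (\<Sum>i\<in>-{j}. k $ i * P i))
    = sgn (k $ j) * (\<Sum>i\<in>-{j}. k $ i * (P i - q * \<omega> $ i))"
proof -
  have m: "m = k $ j * \<omega> $ j + (\<Sum>i\<in>-{j}. k $ i * \<omega> $ i)"
    using assms(1) by (simp add: inner_vec_def sum.remove[of UNIV j] Compl_eq_Diff_UNIV)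
  have "(\<Sum>i\<in>-{j}. k $ i * (P i - q * \<omega> $ i))
      = (\<Sum>i\<in>-{j}. k $ i * P i) - q * (\<Sum>i\<in>-{j}. k $ i * \<omega> $ i)"
    by (simp add: sum_subtractf sum_distrib_left right_diff_distrib mult.left_commute)
  moreover have "\<bar>k $ j\<bar> = sgn (k $ j) * k $ j" by (simp add: abs_sgn mult.commute)
  moreover have "sgn (k $ j) * sgn (k $ j) = 1" using assms(2) by (simp add: sgn_if)
  ultimately show ?thesis unfolding m by algebra
qed

lemma inner_relation_coordinate_le:
  fixes k \<omega> :: "real^'n" and P :: "'n \<Rightarrow> real"
  assumes "k \<bullet> \<omega> = m" "k $ j \<noteq> 0" and approx: "\<And>i. i \<noteq> j \<Longrightarrow> \<bar>q * \<omega> $ i - P i\<bar> \<le> \<epsilon>"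
  shows "\<bar>\<bar>k $ j\<bar> * q * \<omega> $ j - sgn (k $ j) * (q * m - (\<Sum>i\<in>-{j}. k $ i * P i))\<bar>
    \<le> (\<Sum>i\<in>-{j}. \<bar>k $ i\<bar>) * \<epsilon>"
proof -
  have "\<bar>\<bar>k $ j\<bar> * q * \<omega> $ j - sgn (k $ j) * (q * m - (\<Sum>i\<in>-{j}. k $ i * P i))\<bar>
      = \<bar>\<Sum>i\<in>-{j}. k $ i * (P i - q * \<omega> $ i)\<bar>"
    using assms(2) by (simp add: inner_relation_coordinate_eq[OF assms(1,2)] abs_mult)
  also have "\<dots> \<le> (\<Sum>i\<in>-{j}. \<bar>k $ i\<bar> * \<epsilon>)"
  proof (intro order_trans[OF sum_abs] sum_mono)
    fix i assume "i \<in> -{j}"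
    then show "\<bar>k $ i * (P i - q * \<omega> $ i)\<bar> \<le> \<bar>k $ i\<bar> * \<epsilon>"
      using approx[of i] unfolding abs_mult by (intro mult_left_mono) (auto simp: abs_minus_commute)
  qed
  finally show ?thesis by (simp add: sum_distrib_right)
qed

lemma resonant_good_approximations:
  fixes k \<omega> :: "real^'n" and Q :: nat
  assumes k: "int_vec k" "k \<noteq> 0" and m: "k \<bullet> \<omega> \<in> \<int>" and Q: "Q > 0"
  obtains T :: nat where "T \<ge> 1"
    and "real T \<le> (\<Sum>i\<in>UNIV. \<bar>k $ i\<bar>) * real Q ^ (CARD('n) - 1)"
    and "znorm (real T *\<^sub>R \<omega>) \<le> (\<Sum>i\<in>UNIV. \<bar>k $ i\<bar>) / real Q"
proof -
  define c where "c = (\<Sum>i\<in>UNIV. \<bar>k $ i\<bar>)"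
  obtain j where j: "k $ j \<noteq> 0" using k(2) by (metis vec_eq_iff zero_index)
  obtain z :: int where z: "k $ j = of_int z" using k(1) unfolding int_vec_def by (metis Ints_cases)
  have "1 \<le> \<bar>k $ j\<bar>" using j z by simp
  moreover have "\<bar>k $ j\<bar> \<le> c" unfolding c_def by (rule member_le_sum) simp_all
  ultimately have kj: "1 \<le> \<bar>k $ j\<bar>" "\<bar>k $ j\<bar> \<le> c" by blast+
  have rest: "(\<Sum>i\<in>-{j}. \<bar>k $ i\<bar>) \<le> c"
    unfolding c_def by (rule sum_mono2) auto
  have "card (-{j}) = CARD('n) - 1" by (simp add: Compl_eq_Diff_UNIV card_Diff_singleton)
  then obtain q p where q: "0 < q" "q \<le> int (Q ^ (CARD('n) - 1))"
    and approx: "\<And>i. i \<noteq> j \<Longrightarrow> \<bar>of_int q * \<omega> $ i - of_int (p i)\<bar> < 1 / Q"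
    using Dirichlet_approx_simult_finite[of "-{j}" Q "\<lambda>i. \<omega> $ i"] Q by auto
  have approx_le: "\<And>i. i \<noteq> j \<Longrightarrow> \<bar>of_int q * \<omega> $ i - of_int (p i)\<bar> \<le> 1 / Q"
    using approx less_imp_le by blast
  define T where "T = nat (\<bar>z\<bar> * q)"
  have T: "real T = \<bar>k $ j\<bar> * q" unfolding T_def z using q by simp
  \<comment> \<open>off \<open>j\<close> round to \<open>|k\<^sub>j| p\<^sub>i\<close>; at \<open>j\<close> use the integer dictated by the relation\<close>
  define v :: "real^'n" where "v = (\<chi> i. if i = j
    then sgn (k $ j) * (q * (k \<bullet> \<omega>) - (\<Sum>i\<in>-{j}. k $ i * p i)) else \<bar>k $ j\<bar> * p i)"
  have v: "int_vec v"
    using k(1) m unfolding int_vec_def v_def by (auto simp: sgn_if)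
  have "\<bar>(real T *\<^sub>R \<omega> - v) $ i\<bar> \<le> c / Q" for i
  proof (cases "i = j")
    case True
    have "\<bar>(real T *\<^sub>R \<omega> - v) $ i\<bar> \<le> (\<Sum>i\<in>-{j}. \<bar>k $ i\<bar>) * (1 / Q)"
      using True inner_relation_coordinate_le[OF refl j approx_le] by (simp add: v_def T)
    also have "\<dots> \<le> c / Q" using rest by (simp add: divide_right_mono)
    finally show ?thesis .
  next
    case False
    have "(real T *\<^sub>R \<omega> - v) $ i = \<bar>k $ j\<bar> * (q * \<omega> $ i - p i)"
      using False by (simp add: v_def T algebra_simps)
    then have "\<bar>(real T *\<^sub>R \<omega> - v) $ i\<bar> = \<bar>k $ j\<bar> * \<bar>q * \<omega> $ i - p i\<bar>"
      by (simp add: abs_mult)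
    also have "\<dots> \<le> c * (1 / Q)"
      using approx_le[OF False] kj by (intro mult_mono) auto
    finally show ?thesis by simp
  qed
  then have "znorm (real T *\<^sub>R \<omega>) \<le> c / Q"
    using znorm_le[OF v, of "real T *\<^sub>R \<omega>"] maxnorm_le by (meson order_trans)
  moreover have "real T \<le> c * real Q ^ (CARD('n) - 1)"
  proof -
    have "real_of_int q \<le> real Q ^ (CARD('n) - 1)"
      using q(2) by (metis of_int_le_iff of_int_of_nat_eq of_nat_power)
    then show ?thesis unfolding T using kj q(1) by (intro mult_mono) auto
  qed
  moreover have "T \<ge> 1"
  proof -
    have "1 * 1 \<le> \<bar>k $ j\<bar> * real_of_int q" using kj q(1) by (intro mult_mono) auto
    then show ?thesis using T by simp
  qed
  ultimately show thesis using that unfolding c_def by blast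
qed

lemma powr_neg_max_le:
  fixes t x e :: real
  assumes "1 \<le> t" "t \<le> x"
  shows "x powr (- max e 0) \<le> t powr (- e)"
proof -
  have "x powr (- max e 0) \<le> t powr (- max e 0)"
    using assms by (intro powr_mono2') auto
  also have "\<dots> \<le> t powr (- e)"
    using assms(1) by (intro powr_mono) auto
  finally show ?thesis .
qed

lemma powr_rearrange_bound:
  fixes C c Q m e :: real
  assumes "C > 0" "c > 0" "Q > 0"
    and "C * (c * Q powr m) powr (- e) \<le> c / Q"
  shows "Q powr (1 - m * e) \<le> c / (C * c powr (- e))"
proof -
  have "(c * Q powr m) powr (- e) = c powr (- e) * Q powr (- (m * e))"
    using assms by (simp add: powr_mult powr_powr)
  moreover have "Q powr (1 - m * e) = Q * Q powr (- (m * e))"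
    using assms(3) powr_add[of Q 1 "- (m * e)"] by simp
  ultimately show ?thesis
    using assms by (simp add: field_simps)
qed

lemma nat_powr_unbounded:
  fixes d B :: real
  assumes "d > 0"
  obtains Q :: nat where "Q > 0" "B < real Q powr d"
proof -
  define M where "M = max B 1"
  define Q where "Q = nat \<lceil>M powr (1 / d)\<rceil> + 1"
  have "(M powr (1 / d)) powr d < real Q powr d"
    unfolding Q_def using assms by (intro powr_less_mono2) (auto, linarith)
  moreover have "(M powr (1 / d)) powr d = M"
    using assms by (simp add: M_def powr_powr)
  ultimately show thesis
    using that[of Q] unfolding M_def Q_def by auto
qed

lemma max_growth_exponent_lt_one:
  fixes \<tau> :: real and n :: nat
  assumes "n \<ge> 1" "n = 1 \<or> \<tau> < 1 / (real n - 1)"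
  shows "(real n - 1) * max ((1 + \<tau>) / n) 0 < 1"
proof (cases "n = 1")
  case False
  then have "real n - 1 > 0" "(real n - 1) * \<tau> < 1"
    using assms by (auto simp: field_simps)
  then have "(real n - 1) * ((1 + \<tau>) / n) < 1"
    using assms(1) by (simp add: field_simps)
  then show ?thesis by (simp add: max_def)
qed simp

lemma Omega_resonant_bounded:
  fixes \<omega> k :: "real^'n"
  assumes "\<omega> \<in> Omega \<tau>" and k: "int_vec k" "k \<noteq> 0" "k \<bullet> \<omega> \<in> \<int>"
  obtains B where "\<And>Q::nat. Q > 0 \<Longrightarrow>
    real Q powr (1 - (real CARD('n) - 1) * max ((1 + \<tau>) / CARD('n)) 0) \<le> B"
proof -
  obtain C where "C > 0" and lower: "\<And>T::nat. T \<ge> 1 \<Longrightarrow>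
      C * real T powr (-(1 + \<tau>) / CARD('n)) \<le> znorm (real T *\<^sub>R \<omega>)"
    using assms(1) unfolding Omega_def by blast
  define c where "c = (\<Sum>i\<in>UNIV. \<bar>k $ i\<bar>)"
  define e where "e = max ((1 + \<tau>) / CARD('n)) 0"
  define m where "m = real CARD('n) - 1"
  have "real Q powr (1 - m * e) \<le> c / (C * c powr (- e))" if Q: "Q > 0" for Q :: nat
  proof -
    obtain T where T: "T \<ge> 1" "real T \<le> c * real Q ^ (CARD('n) - 1)"
      "znorm (real T *\<^sub>R \<omega>) \<le> c / Q"
      using resonant_good_approximations[OF k Q] unfolding c_def by blast
    have "real Q ^ (CARD('n) - 1) = real Q powr m"
      using Q powr_realpow[of "real Q" "CARD('n) - 1"] unfolding m_def
      by (simp add: of_nat_diff Suc_le_eq)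
    then have "real T \<le> c * real Q powr m" using T(2) by simp
    then have "(c * real Q powr m) powr (- e) \<le> real T powr (-(1 + \<tau>) / CARD('n))"
      using powr_neg_max_le[of "real T" _ "(1 + \<tau>) / CARD('n)"] T(1) unfolding e_def
      by (metis minus_divide_left of_nat_1 of_nat_le_iff)
    then have "C * (c * real Q powr m) powr (- e) \<le> C * real T powr (-(1 + \<tau>) / CARD('n))"
      using \<open>C > 0\<close> by (simp add: mult_left_mono)
    also have "\<dots> \<le> c / Q" using lower[OF T(1)] T(3) by linarith
    finally have est: "C * (c * real Q powr m) powr (- e) \<le> c / Q" .
    have "c > 0"
    proof (rule ccontr)
      assume "\<not> c > 0"
      then have "c * real Q ^ (CARD('n) - 1) \<le> 0" by (simp add: mult_nonpos_nonneg)
      with T(1,2) show False by simp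
    qed
    then show ?thesis by (rule powr_rearrange_bound[OF \<open>C > 0\<close> _ _ est]) (simp add: Q)
  qed
  then show thesis using that unfolding m_def e_def by blast
qed

theorem mainTheorem5:
  fixes \<omega> :: "real^'n" and \<tau> :: real
  assumes "CARD('n) = 1 \<or> \<tau> < 1 / (real CARD('n) - 1)"
    and "\<omega> \<in> Omega \<tau>"
  shows "non_resonant \<omega>"
proof (rule ccontr)
  assume "\<not> non_resonant \<omega>"
  then obtain k where "int_vec k" "k \<noteq> 0" "k \<bullet> \<omega> \<in> \<int>"
    unfolding non_resonant_def by blast
  then obtain B where bounded: "\<And>Q::nat. Q > 0 \<Longrightarrow>
      real Q powr (1 - (real CARD('n) - 1) * max ((1 + \<tau>) / CARD('n)) 0) \<le> B"
    using Omega_resonant_bounded[OF assms(2)] by blast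
  have "0 < 1 - (real CARD('n) - 1) * max ((1 + \<tau>) / CARD('n)) 0"
    using max_growth_exponent_lt_one[of "CARD('n)" \<tau>] assms(1) by simp
  then obtain Q :: nat where "Q > 0"
    and "B < real Q powr (1 - (real CARD('n) - 1) * max ((1 + \<tau>) / CARD('n)) 0)"
    by (rule nat_powr_unbounded)
  with bounded[OF \<open>Q > 0\<close>] show False by linarith
qed

end
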